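(* Let $a>0$. Then $$\int_0^1 g_a(x)\,dx=1-\sum_{n\ge1}\frac{\Gamma(an+1)\,\Gamma(an+n-1)}{\Gamma(an+n+2)\,\Gamma(an)}=1-\frac{a}{2(a+1)}-\frac{a\pi}{2(a+1)^2}\cot\frac{a\pi}{a+1}.$$
   Context: For $a>0$ let $\phi_a(x)=x^a-x^{a+1}$ on $[0,1]$, strictly increasing on $[0,x_0]$ and strictly decreasing on $[x_0,1]$ with $x_0=a/(a+1)$. Let $r_a$ be the restriction of $\phi_a$ to $[x_0,1]$, and define $g_a(x)=r_a^{-1}(\phi_a(x))$ for $0\le x\le 1$. *)

theory Defs
  imports "HOL-Analysis.Analysis"
begin

definition phi :: "real \<Rightarrow> real \<Rightarrow> real" where
  "phi a x = x powr a - x powr (a + 1)"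

definition x0 :: "real \<Rightarrow> real" where
  "x0 a = a / (a + 1)"

definition g :: "real \<Rightarrow> real \<Rightarrow> real" where
  "g a x = (THE y. y \<in> {x0 a..1} \<and> phi a y = phi a x)"

end

theory Submission
  imports Defs
begin

text \<open>
  Parametrise the graph of g_a over [0, x0] by the ratio w = x / g_a(x) in [0, 1]: the equation
  phi_a(w y) = phi_a(y) forces y = Y(w) = (1 - w^a) / (1 - w^(a+1)). Substituting x = w Y(w) and
  integrating by parts gives int_0^1 g_a = 1/2 + (1/2) int_0^1 Y^2. Expanding
  Y^2 = (1 - w^a)^2 sum_k (k+1) w^((a+1)k) and integrating termwise leaves, after telescoping, the
  series sum_k (1/(k+z) - 1/(k+1-z)) = pi cot(pi z) with z = 1/(a+1), which is the reflection
  formula for the digamma function. The Gamma quotients are partial fractions of the same kind.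
\<close>

lemma Gamma_reflection_real: "Gamma (z::real) * Gamma (1 - z) = pi / sin (pi * z)"
proof -
  have "complex_of_real (Gamma z * Gamma (1 - z)) = complex_of_real (pi / sin (pi * z))"
    using Gamma_reflection_complex[of "complex_of_real z"]
    by (simp add: Gamma_complex_of_real[symmetric] sin_of_real[symmetric])
  then show ?thesis
    by (simp only: of_real_eq_iff)
qed

lemma Digamma_reflection_real:
  assumes z: "0 < z" "z < (1::real)"
  shows "Digamma (1 - z) - Digamma z = pi * cot (pi * z)"
proof -
  define F where "F x = Gamma x * Gamma (1 - x) * sin (pi * x)" for x :: real
  have sin_pos: "sin (pi * x) > 0" if "0 < x" "x < 1" for x
    using that by (intro sin_gt_zero) auto
  have "z \<notin> \<int>\<^sub>\<le>\<^sub>0" "1 - z \<notin> \<int>\<^sub>\<le>\<^sub>0"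
    using z by (auto elim!: nonpos_Ints_cases)
  then have "(F has_field_derivative Gamma z * Gamma (1 - z) *
      ((Digamma z - Digamma (1 - z)) * sin (pi * z) + cos (pi * z) * pi)) (at z)"
    unfolding F_def by (auto intro!: derivative_eq_intros simp: algebra_simps)
  moreover have "(F has_field_derivative 0) (at z)"
  proof (rule has_field_derivative_transform_within_open[of "\<lambda>_. pi" 0 z "{0<..<1}"])
    show "pi = F x" if "x \<in> {0<..<1}" for x
      using that Gamma_reflection_real[of x] sin_pos[of x] by (simp add: F_def)
  qed (use z in auto)
  ultimately have "Gamma z * Gamma (1 - z) *
      ((Digamma z - Digamma (1 - z)) * sin (pi * z) + cos (pi * z) * pi) = 0"
    by (rule DERIV_unique)
  moreover have "Gamma z > 0" "Gamma (1 - z) > 0"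
    using z by auto
  ultimately have "(Digamma z - Digamma (1 - z)) * sin (pi * z) + cos (pi * z) * pi = 0"
    by simp
  then show ?thesis
    using sin_pos[OF z] by (simp add: cot_def field_simps)
qed

lemma cot_partial_fractions_sums:
  assumes z: "0 < z" "z < (1::real)"
  shows "(\<lambda>k. 1 / (real k + z) - 1 / (real k + 1 - z)) sums (pi * cot (pi * z))"
proof -
  have Digamma_sums: "(\<lambda>k. inverse (real (Suc k)) - inverse (y + real k)) sums (Digamma y + euler_mascheroni)"
    if "y \<noteq> 0" for y :: real
    using summable_sums[OF summable_Digamma[OF that]] by (simp add: Digamma_def)
  have "(\<lambda>k. (inverse (real (Suc k)) - inverse (1 - z + real k)) - (inverse (real (Suc k)) - inverse (z + real k)))
      sums ((Digamma (1 - z) + euler_mascheroni) - (Digamma z + euler_mascheroni))"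
    using z by (intro sums_diff Digamma_sums) auto
  then show ?thesis
    using Digamma_reflection_real[OF z] by (simp add: divide_inverse algebra_simps)
qed

lemma inverse_linear_telescope_sums:
  assumes c: "c > (0::real)"
  shows "(\<lambda>k. 1 / (c * real k + x) - 1 / (c * real k + c + x)) sums (1 / x)"
proof -
  have "filterlim (\<lambda>k. x + c * real k) at_top sequentially"
    by (intro filterlim_tendsto_add_at_top[OF tendsto_const]
          filterlim_tendsto_pos_mult_at_top[OF tendsto_const c] filterlim_real_sequentially)
  then have "(\<lambda>k. 1 / (c * real k + x)) \<longlonglongrightarrow> 0"
    using tendsto_inverse_0_at_top by (simp add: divide_inverse add.commute)
  from telescope_sums'[OF this] show ?thesis
    by (simp add: algebra_simps)
qed

lemma cot_arith_progression_sums: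
  assumes c: "c > (1::real)"
  shows "(\<lambda>k. 1 / (c * real k + 1) - 1 / (c * real k + c - 1)) sums (pi * cot (pi / c) / c)"
proof -
  have "(\<lambda>k. (1 / (real k + 1 / c) - 1 / (real k + 1 - 1 / c)) / c) sums (pi * cot (pi * (1 / c)) / c)"
    using c by (intro sums_divide cot_partial_fractions_sums) auto
  moreover have "(1 / (real k + 1 / c) - 1 / (real k + 1 - 1 / c)) / c
      = 1 / (c * real k + 1) - 1 / (c * real k + c - 1)" for k
  proof -
    have shifted: "real k + 1 / c = (c * real k + 1) / c" "real k + 1 - 1 / c = (c * real k + c - 1) / c"
      using c by (simp_all add: field_simps)
    show ?thesis
      unfolding shifted using c by (simp add: diff_divide_distrib) (simp add: diff_divide_distrib[symmetric])
  qed
  ultimately show ?thesis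
    by simp
qed

lemma Gamma_plus_3:
  assumes "x > (0::real)"
  shows "Gamma (x + 3) = x * (x + 1) * (x + 2) * Gamma x"
proof -
  have "x \<notin> \<int>\<^sub>\<le>\<^sub>0"
    using assms by (auto elim!: nonpos_Ints_cases)
  then have "pochhammer x 3 = Gamma (x + 3) / Gamma x"
    using pochhammer_Gamma[of x 3] by simp
  moreover have "pochhammer x 3 = x * (x + 1) * (x + 2)"
    by (simp add: numeral_3_eq_3 pochhammer_Suc)
  moreover have "Gamma x > 0"
    using assms by simp
  ultimately show ?thesis
    by (simp add: field_simps)
qed

lemma Gamma_quotient_partial_fractions:
  fixes a N :: real
  assumes a: "a > 0" and N: "N \<ge> 1"
  shows "Gamma (a * N + 1) * Gamma (a * N + N - 1) / (Gamma (a * N + N + 2) * Gamma (a * N))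
       = a / (2 * (a + 1)) * (1 / ((a + 1) * N - 1) - 1 / ((a + 1) * N + 1))"
proof -
  define x where "x = (a + 1) * N - 1"
  have aN: "a * N > 0"
    using a N by simp
  then have x: "x > 0"
    using N by (simp add: x_def algebra_simps)
  have "Gamma (a * N + 1) = a * N * Gamma (a * N)"
    using aN by (intro Gamma_plus1) (auto elim!: nonpos_Ints_cases)
  moreover have "Gamma (a * N + N + 2) = x * (x + 1) * (x + 2) * Gamma x"
    using Gamma_plus_3[OF x] by (simp add: x_def algebra_simps)
  moreover have "Gamma (a * N + N - 1) = Gamma x"
    by (simp add: x_def algebra_simps)
  ultimately have "Gamma (a * N + 1) * Gamma (a * N + N - 1) / (Gamma (a * N + N + 2) * Gamma (a * N))
      = (a * N * (Gamma x * Gamma (a * N))) / (x * (x + 1) * (x + 2) * (Gamma x * Gamma (a * N)))"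
    by (simp add: mult_ac)
  also have "\<dots> = a * N / (x * (x + 1) * (x + 2))"
    using Gamma_real_pos[OF x] Gamma_real_pos[OF aN] by simp
  also have "\<dots> = a / (2 * (a + 1)) * (1 / x - 1 / (x + 2))"
  proof -
    have "x + 1 = (a + 1) * N" "x \<noteq> 0" "x + 2 \<noteq> 0" "a + 1 \<noteq> 0" "N \<noteq> 0"
      using a N x by (auto simp: x_def)
    then show ?thesis
      by (simp add: divide_simps)
  qed
  finally show ?thesis
    by (simp add: x_def add.assoc)
qed

lemma Gamma_quotient_sums:
  fixes a :: real
  assumes a: "a > 0"
  shows "(\<lambda>n. Gamma (a * real (Suc n) + 1) * Gamma (a * real (Suc n) + real (Suc n) - 1)
              / (Gamma (a * real (Suc n) + real (Suc n) + 2) * Gamma (a * real (Suc n))))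
         sums (a / (2 * (a + 1)) * (1 - pi * cot (pi / (a + 1)) / (a + 1)))"
proof -
  define c where "c = a + 1"
  have "(\<lambda>n. a / (2 * c) * ((1 / (c * real n + 1) - 1 / (c * real n + c + 1))
         - (1 / (c * real n + 1) - 1 / (c * real n + c - 1))))
      sums (a / (2 * c) * (1 / 1 - pi * cot (pi / c) / c))"
    using a by (intro sums_mult sums_diff inverse_linear_telescope_sums cot_arith_progression_sums)
      (auto simp: c_def)
  moreover have "a / (2 * c) * ((1 / (c * real n + 1) - 1 / (c * real n + c + 1))
         - (1 / (c * real n + 1) - 1 / (c * real n + c - 1)))
      = Gamma (a * real (Suc n) + 1) * Gamma (a * real (Suc n) + real (Suc n) - 1)
              / (Gamma (a * real (Suc n) + real (Suc n) + 2) * Gamma (a * real (Suc n)))" for n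
    using Gamma_quotient_partial_fractions[OF a, of "real (Suc n)"]
    by (simp add: c_def algebra_simps)
  ultimately show ?thesis
    by (simp add: c_def)
qed

lemma powr_lt_1: "0 \<le> (w::real) \<Longrightarrow> w < 1 \<Longrightarrow> 0 < p \<Longrightarrow> w powr p < 1"
  by (metis powr_less_mono2 powr_one_eq_one)

lemma phi_eq_powr_mult: "0 \<le> x \<Longrightarrow> phi a x = x powr a * (1 - x)"
  by (cases "x = 0") (simp_all add: phi_def powr_add algebra_simps)

lemma x0_pos: "a > 0 \<Longrightarrow> x0 a > 0"
  by (simp add: x0_def)

lemma phi_has_real_derivative:
  assumes "t > 0"
  shows "(phi a has_real_derivative t powr (a - 1) * (a - (a + 1) * t)) (at t)"
proof -
  have "(phi a has_real_derivative a * t powr (a - 1) - (a + 1) * t powr (a + 1 - 1)) (at t)"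
    unfolding phi_def[abs_def] using assms by (intro derivative_intros has_real_derivative_powr)
  moreover have "t powr (a + 1 - 1) = t powr (a - 1) * t"
    using assms by (simp add: powr_diff)
  ultimately show ?thesis
    by (simp add: algebra_simps)
qed

lemma phi_decreasing:
  assumes a: "a > 0" and xy: "x0 a \<le> x" "x < y" "y \<le> 1"
  shows "phi a y < phi a x"
proof (rule DERIV_neg_imp_decreasing_open[OF \<open>x < y\<close>])
  have "x > 0"
    using x0_pos[OF a] xy(1) by linarith
  then show "continuous_on {x..y} (phi a)"
    unfolding phi_def[abs_def] by (intro continuous_intros) auto
  fix t assume t: "x < t" "t < y"
  have "a \<le> (a + 1) * x"
    using a xy(1) by (simp add: x0_def field_simps)
  moreover have "(a + 1) * x < (a + 1) * t"
    using a t by simp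
  ultimately have "t > 0" "a - (a + 1) * t < 0"
    using \<open>x > 0\<close> t by auto
  then have "t powr (a - 1) * (a - (a + 1) * t) < 0"
    by (simp add: mult_pos_neg)
  with phi_has_real_derivative[OF \<open>t > 0\<close>]
  show "\<exists>D. (phi a has_real_derivative D) (at t) \<and> D < 0"
    by blast
qed

lemma inj_on_phi: "a > 0 \<Longrightarrow> inj_on (phi a) {x0 a..1}"
  unfolding inj_on_def by (metis atLeastAtMost_iff linorder_cases order_less_irrefl phi_decreasing)

lemma g_eqI:
  assumes "a > 0" "y \<in> {x0 a..1}" "phi a y = phi a x"
  shows "g a x = y"
  unfolding g_def using assms inj_onD[OF inj_on_phi[OF assms(1)]] by (intro the_equality) auto

lemma g_eq_self: "a > 0 \<Longrightarrow> x \<in> {x0 a..1} \<Longrightarrow> g a x = x"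
  by (rule g_eqI) auto

text \<open>For \<open>w \<in> [0,1]\<close> the points \<open>w * Y a w \<le> x0 a \<le> Y a w\<close> have the same \<open>\<phi>\<^sub>a\<close>-value, so \<open>w\<close>
  parametrises the graph of \<open>g\<^sub>a\<close> over \<open>[0, x0 a]\<close> as \<open>x = w * Y a w\<close>, \<open>g\<^sub>a(x) = Y a w\<close>.
  The value at \<open>w = 1\<close> is the limit of the quotient.\<close>

definition Y :: "real \<Rightarrow> real \<Rightarrow> real" where
  "Y a w = (if w = 1 then x0 a else (1 - w powr a) / (1 - w powr (a + 1)))"

lemma Y_mult_denominator:
  assumes "a > 0" "0 \<le> w" "w < 1"
  shows "Y a w * (1 - w powr (a + 1)) = 1 - w powr a" and "1 - w powr (a + 1) > 0"
proof -
  show "1 - w powr (a + 1) > 0"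
    using powr_lt_1[of w "a + 1"] assms by simp
  then show "Y a w * (1 - w powr (a + 1)) = 1 - w powr a"
    using assms by (simp add: Y_def)
qed

lemma one_minus_powr_succ_le:
  fixes a w :: real
  assumes a: "a > 0" and w: "0 \<le> w" "w \<le> 1"
  shows "a * (1 - w powr (a + 1)) \<le> (a + 1) * (1 - w powr a)"
proof -
  define k where "k t = 1 - (a + 1) * t powr a + a * t powr (a + 1)" for t
  have "k 1 \<le> k w"
  proof (cases "w = 0")
    case True
    then show ?thesis
      using a by (simp add: k_def)
  next
    case False
    show ?thesis
    proof (rule DERIV_nonpos_imp_nonincreasing[OF w(2)])
      fix t assume t: "w \<le> t" "t \<le> 1"
      then have "t > 0"
        using False w(1) by linarith
      have "(k has_real_derivative 0 - (a + 1) * (a * t powr (a - 1)) + a * ((a + 1) * t powr (a + 1 - 1))) (at t)"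
        unfolding k_def using \<open>t > 0\<close> by (intro derivative_intros DERIV_cmult has_real_derivative_powr)
      moreover have "0 - (a + 1) * (a * t powr (a - 1)) + a * ((a + 1) * t powr (a + 1 - 1))
          = a * (a + 1) * t powr (a - 1) * (t - 1)"
      proof -
        have "t powr (a + 1 - 1) = t powr (a - 1) * t"
          using \<open>t > 0\<close> by (simp add: powr_diff)
        then show ?thesis
          by (simp add: algebra_simps)
      qed
      moreover have "a * (a + 1) * t powr (a - 1) * (t - 1) \<le> 0"
        using a t by (simp add: mult_nonneg_nonpos)
      ultimately show "\<exists>D. (k has_real_derivative D) (at t) \<and> D \<le> 0"
        by auto
    qed
  qed
  then show ?thesis
    by (simp add: k_def algebra_simps)
qed

lemma Y_le_1:
  assumes a: "a > 0" and w: "w \<in> {0..1}"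
  shows "Y a w \<le> 1"
proof (cases "w = 1")
  case False
  with w have "0 \<le> w" "w < 1"
    by auto
  note Y = Y_mult_denominator[OF a this]
  have "w powr (a + 1) \<le> w powr a"
    using \<open>0 \<le> w\<close> \<open>w < 1\<close> by (simp add: powr_add mult_left_le)
  then have "Y a w * (1 - w powr (a + 1)) \<le> 1 * (1 - w powr (a + 1))"
    unfolding Y(1) by simp
  then show ?thesis
    using Y(2) by (simp only: mult_le_cancel_right_pos)
qed (use a in \<open>simp add: Y_def x0_def\<close>)

lemma x0_le_Y:
  assumes a: "a > 0" and w: "w \<in> {0..1}"
  shows "x0 a \<le> Y a w"
proof (cases "w = 1")
  case False
  with w have "0 \<le> w" "w < 1"
    by auto
  note Y = Y_mult_denominator[OF a this]
  have "a * (1 - w powr (a + 1)) \<le> (a + 1) * (Y a w * (1 - w powr (a + 1)))"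
    unfolding Y(1) using one_minus_powr_succ_le a w by auto
  then show ?thesis
    using a Y(2) by (simp add: x0_def divide_simps mult_ac)
qed (simp add: Y_def)

lemma Y_pos: "a > 0 \<Longrightarrow> w \<in> {0..1} \<Longrightarrow> Y a w > 0"
  using x0_le_Y[of a w] x0_pos[of a] by linarith

lemma phi_mult_Y:
  assumes a: "a > 0" and w: "w \<in> {0..1}"
  shows "phi a (w * Y a w) = phi a (Y a w)"
proof (cases "w = 1")
  case False
  with w have "0 \<le> w" "w < 1"
    by auto
  define y where "y = Y a w"
  have "y > 0"
    using Y_pos[OF a w] by (simp add: y_def)
  have "y * (1 - w powr a * w) = 1 - w powr a"
    using Y_mult_denominator(1)[OF a \<open>0 \<le> w\<close> \<open>w < 1\<close>] \<open>0 \<le> w\<close>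
    by (cases "w = 0") (simp_all add: y_def powr_add)
  then have "w powr a * (1 - w * y) = 1 - y"
    by (simp add: algebra_simps)
  then have "phi a (w * y) = y powr a * (1 - y)"
    using \<open>0 \<le> w\<close> \<open>y > 0\<close> by (simp add: phi_eq_powr_mult powr_mult mult_ac)
  then show ?thesis
    using \<open>y > 0\<close> by (simp add: phi_eq_powr_mult y_def)
qed simp

lemma mult_Y_le_x0:
  assumes a: "a > 0" and w: "w \<in> {0..1}"
  shows "w * Y a w \<le> x0 a"
proof (rule ccontr)
  assume "\<not> ?thesis"
  moreover have "w * Y a w \<le> 1"
    using Y_le_1[OF a w] Y_pos[OF a w] w by (simp add: mult_le_one)
  ultimately have "w * Y a w = Y a w"
    using inj_onD[OF inj_on_phi[OF a] phi_mult_Y[OF a w]] x0_le_Y[OF a w] Y_le_1[OF a w] by auto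
  then have "w = 1"
    using Y_pos[OF a w] by simp
  with \<open>\<not> ?thesis\<close> show False
    by (simp add: Y_def)
qed

lemma g_mult_Y: "a > 0 \<Longrightarrow> w \<in> {0..1} \<Longrightarrow> g a (w * Y a w) = Y a w"
  by (intro g_eqI phi_mult_Y[symmetric]) (auto intro: x0_le_Y Y_le_1)

lemma tendsto_Y_at_1:
  assumes a: "a > 0"
  shows "(Y a \<longlongrightarrow> Y a 1) (at 1)"
proof -
  have "((\<lambda>v. v powr p) has_real_derivative p) (at 1)" for p :: real
    using has_real_derivative_powr[of 1 p] by simp
  then have slope: "((\<lambda>v. (v powr p - 1) / (v - 1)) \<longlongrightarrow> p) (at 1)" for p :: real
    unfolding has_field_derivative_iff by simp
  have "((\<lambda>v. ((v powr a - 1) / (v - 1)) / ((v powr (a + 1) - 1) / (v - 1))) \<longlongrightarrow> a / (a + 1)) (at 1)"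
    using a by (intro tendsto_divide slope) auto
  moreover have "eventually (\<lambda>v. v \<noteq> 1) (at (1::real))"
    by (simp add: eventually_at_filter)
  then have "eventually (\<lambda>v. ((v powr a - 1) / (v - 1)) / ((v powr (a + 1) - 1) / (v - 1)) = Y a v) (at 1)"
  proof eventually_elim
    case (elim v)
    then have "((v powr a - 1) / (v - 1)) / ((v powr (a + 1) - 1) / (v - 1))
        = (v powr a - 1) / (v powr (a + 1) - 1)"
      by (simp add: divide_simps)
    also have "\<dots> = (1 - v powr a) / (1 - v powr (a + 1))"
      by (metis minus_diff_eq minus_divide_divide)
    also have "\<dots> = Y a v"
      using elim by (simp add: Y_def)
    finally show ?case .
  qed
  ultimately have "(Y a \<longlongrightarrow> a / (a + 1)) (at 1)"
    by (rule Lim_transform_eventually)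
  then show ?thesis
    by (simp add: Y_def x0_def)
qed

lemma continuous_on_Y:
  assumes a: "a > 0"
  shows "continuous_on {0..1} (Y a)"
  unfolding continuous_on_def
proof
  fix x :: real
  assume x: "x \<in> {0..1}"
  show "(Y a \<longlongrightarrow> Y a x) (at x within {0..1})"
  proof (cases "x = 1")
    case True
    then show ?thesis
      using tendsto_within_subset[OF tendsto_Y_at_1[OF a]] by simp
  next
    case False
    with x have "0 \<le> x" "x < 1"
      by auto
    have "1 - x powr (a + 1) \<noteq> 0"
      using Y_mult_denominator(2)[OF a \<open>0 \<le> x\<close> \<open>x < 1\<close>] by simp
    moreover have "eventually (\<lambda>v. v \<ge> 0) (at x within {0..1})"
      by (auto simp: eventually_at_filter)
    ultimately have "((\<lambda>v. (1 - v powr a) / (1 - v powr (a + 1)))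
        \<longlongrightarrow> (1 - x powr a) / (1 - x powr (a + 1))) (at x within {0..1})"
      by (intro tendsto_intros) (use a in auto)
    moreover have "eventually (\<lambda>v. v \<in> {..<1}) (nhds x)"
      using \<open>x < 1\<close> by (intro eventually_nhds_in_open) auto
    then have "eventually (\<lambda>v. v \<in> {..<1}) (at x within {0..1})"
      by (simp add: eventually_at_filter eventually_mono)
    then have "eventually (\<lambda>v. (1 - v powr a) / (1 - v powr (a + 1)) = Y a v) (at x within {0..1})"
      by eventually_elim (simp add: Y_def)
    ultimately show ?thesis
      using False by (simp add: Lim_transform_eventually Y_def)
  qed
qed

lemma Y_has_real_derivative:
  assumes a: "a > 0" and w: "0 < w" "w < 1"
  shows "(Y a has_real_derivative deriv (Y a) w) (at w)"
proof -
  have "1 - w powr (a + 1) \<noteq> 0"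
    using powr_lt_1[of w "a + 1"] a w by simp
  then have "((\<lambda>v. (1 - v powr a) / (1 - v powr (a + 1))) has_real_derivative
      ((0 - a * w powr (a - 1)) * (1 - w powr (a + 1)) - (1 - w powr a) * (0 - (a + 1) * w powr (a + 1 - 1)))
        / ((1 - w powr (a + 1)) * (1 - w powr (a + 1)))) (at w)" (is "(_ has_real_derivative ?D) _")
    using w by (intro DERIV_divide DERIV_diff DERIV_const has_real_derivative_powr)
  then have "(Y a has_real_derivative ?D) (at w)"
    by (rule has_field_derivative_transform_within_open[of _ _ w "{0<..<1}"]) (use w in \<open>auto simp: Y_def\<close>)
  then show ?thesis
    by (simp add: DERIV_imp_deriv)
qed

text \<open>The area under the curve \<open>w \<mapsto> (w f(w), f(w))\<close>, integrated by parts.\<close>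

lemma has_integral_radial_area:
  fixes f f' :: "real \<Rightarrow> real"
  assumes cont: "continuous_on {0..1} f"
    and deriv: "\<And>w. w \<in> {0<..<1} \<Longrightarrow> (f has_real_derivative f' w) (at w)"
  shows "((\<lambda>w. (f w + w * f' w) * f w) has_integral
          f 1 ^ 2 / 2 + integral {0..1} (\<lambda>w. f w ^ 2) / 2) {0..1}"
proof -
  define H where "H w = w * f w ^ 2 / 2" for w
  have "((\<lambda>w. f w ^ 2 / 2 + w * f w * f' w) has_integral H 1 - H 0) {0..1}"
  proof (rule fundamental_theorem_of_calculus_interior)
    show "continuous_on {0..1} H"
      unfolding H_def by (intro continuous_intros cont) auto
    fix w :: real
    assume "w \<in> {0<..<1}"
    then have "(H has_real_derivative (1 * f w ^ 2 + (of_nat 2 * (f' w * f w ^ (2 - Suc 0))) * w) / 2) (at w)"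
      unfolding H_def by (intro DERIV_cdivide DERIV_mult DERIV_ident DERIV_power deriv)
    then show "(H has_vector_derivative f w ^ 2 / 2 + w * f w * f' w) (at w)"
      unfolding has_real_derivative_iff_has_vector_derivative[symmetric]
      by (rule DERIV_cong) (simp add: power2_eq_square algebra_simps)
  qed simp
  moreover have "((\<lambda>w. f w ^ 2 / 2) has_integral integral {0..1} (\<lambda>w. f w ^ 2) / 2) {0..1}"
    using cont by (intro has_integral_divide integrable_integral integrable_continuous_real continuous_intros)
  ultimately have "((\<lambda>w. (f w ^ 2 / 2 + w * f w * f' w) + f w ^ 2 / 2) has_integral
      H 1 - H 0 + integral {0..1} (\<lambda>w. f w ^ 2) / 2) {0..1}"
    by (rule has_integral_add)
  moreover have "(f w ^ 2 / 2 + w * f w * f' w) + f w ^ 2 / 2 = (f w + w * f' w) * f w" for w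
    by (simp add: power2_eq_square algebra_simps)
  ultimately show ?thesis
    by (simp add: H_def)
qed

lemma image_mult_Y:
  assumes a: "a > 0"
  shows "(\<lambda>w. w * Y a w) ` {0..1} = {0..x0 a}"
proof
  show "(\<lambda>w. w * Y a w) ` {0..1} \<subseteq> {0..x0 a}"
  proof (rule image_subsetI)
    fix w :: real
    assume w: "w \<in> {0..1}"
    then show "w * Y a w \<in> {0..x0 a}"
      using Y_pos[OF a w] mult_Y_le_x0[OF a w] by (simp add: zero_le_mult_iff)
  qed
  show "{0..x0 a} \<subseteq> (\<lambda>w. w * Y a w) ` {0..1}"
  proof
    fix x
    assume "x \<in> {0..x0 a}"
    moreover have "continuous_on {0..1} (\<lambda>w. w * Y a w)"
      by (intro continuous_intros continuous_on_Y[OF a])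
    ultimately have "\<exists>w. 0 \<le> w \<and> w \<le> 1 \<and> w * Y a w = x"
      by (intro IVT') (auto simp: Y_def)
    then show "x \<in> (\<lambda>w. w * Y a w) ` {0..1}"
      by auto
  qed
qed

text \<open>On \<open>[0, x0 a]\<close> the function \<open>g\<^sub>a\<close> is \<open>Y\<^sub>a\<close> composed with the continuous inverse \<open>x \<mapsto> x / g\<^sub>a(x)\<close>
  of the parametrisation.\<close>

lemma continuous_on_g_lower:
  assumes a: "a > 0"
  shows "continuous_on {0..x0 a} (g a)"
proof -
  let ?X = "\<lambda>w. w * Y a w"
  have cont_X: "continuous_on {0..1} ?X"
    by (intro continuous_intros continuous_on_Y[OF a])
  have ratio: "?X w / g a (?X w) = w" if "w \<in> {0..1}" for w
    using g_mult_Y[OF a that] Y_pos[OF a that] by simp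
  then have "continuous_on (?X ` {0..1}) (\<lambda>x. x / g a x)"
    by (intro continuous_on_inv[OF cont_X compact_Icc]) auto
  moreover have "(\<lambda>x. x / g a x) ` ?X ` {0..1} = {0..1}"
    using ratio by (force simp: image_iff)
  ultimately have "continuous_on (?X ` {0..1}) (Y a \<circ> (\<lambda>x. x / g a x))"
    by (intro continuous_on_compose) (simp_all add: continuous_on_Y[OF a])
  moreover have "(Y a \<circ> (\<lambda>x. x / g a x)) x = g a x" if "x \<in> ?X ` {0..1}" for x
    using that ratio g_mult_Y[OF a] by auto
  ultimately have "continuous_on (?X ` {0..1}) (g a)"
    by (rule continuous_on_eq)
  then show ?thesis
    by (simp only: image_mult_Y[OF a])
qed

lemma has_integral_g_lower_substitution:
  assumes a: "a > 0"
  shows "((\<lambda>w. (Y a w + w * deriv (Y a) w) * Y a w) has_integral integral {0..x0 a} (g a)) {0..1}"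
proof -
  let ?X = "\<lambda>w. w * Y a w" and ?X' = "\<lambda>w. Y a w + w * deriv (Y a) w"
  have deriv_X: "(?X has_real_derivative ?X' w) (at w within {0..1})" if "w \<in> {0..1} - {0, 1}" for w
  proof -
    from that have "0 < w" "w < 1"
      by auto
    then have "(?X has_real_derivative 1 * Y a w + deriv (Y a) w * w) (at w)"
      by (intro DERIV_mult DERIV_ident Y_has_real_derivative[OF a])
    then have "(?X has_real_derivative ?X' w) (at w)"
      by (simp add: mult.commute)
    then show ?thesis
      by (rule has_field_derivative_at_within)
  qed
  have "((\<lambda>w. ?X' w *\<^sub>R g a (?X w)) has_integral integral {?X 0..?X 1} (g a)) {0..1}"
  proof (rule has_integral_substitution_strong[of "{0, 1}" 0 1 ?X 0 "x0 a"])
    show "?X 0 \<le> ?X 1"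
      using x0_pos[OF a] by (simp add: Y_def)
    show "?X ` {0..1} \<subseteq> {0..x0 a}"
      using image_mult_Y[OF a] by simp
    show "continuous_on {0..x0 a} (g a)"
      by (rule continuous_on_g_lower[OF a])
    show "continuous_on {0..1} ?X"
      by (intro continuous_intros continuous_on_Y[OF a])
  qed (use deriv_X in auto)
  moreover have "?X 0 = 0" "?X 1 = x0 a"
    by (simp_all add: Y_def)
  ultimately have "((\<lambda>w. ?X' w *\<^sub>R g a (?X w)) has_integral integral {0..x0 a} (g a)) {0..1}"
    by (simp only:)
  then show ?thesis
    by (rule has_integral_eq[rotated]) (simp add: g_mult_Y[OF a])
qed

lemma has_integral_g_lower:
  assumes a: "a > 0"
  shows "(g a has_integral x0 a ^ 2 / 2 + integral {0..1} (\<lambda>w. Y a w ^ 2) / 2) {0..x0 a}"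
proof -
  have "((\<lambda>w. (Y a w + w * deriv (Y a) w) * Y a w) has_integral
      x0 a ^ 2 / 2 + integral {0..1} (\<lambda>w. Y a w ^ 2) / 2) {0..1}"
    using has_integral_radial_area[OF continuous_on_Y[OF a] Y_has_real_derivative[OF a]] by (simp add: Y_def)
  then have "integral {0..x0 a} (g a) = x0 a ^ 2 / 2 + integral {0..1} (\<lambda>w. Y a w ^ 2) / 2"
    using has_integral_g_lower_substitution[OF a] by (rule has_integral_unique[rotated])
  then show ?thesis
    using integrable_continuous_real[OF continuous_on_g_lower[OF a]] by (metis has_integral_integral)
qed

lemma has_integral_g:
  assumes a: "a > 0"
  shows "(g a has_integral 1 / 2 + integral {0..1} (\<lambda>w. Y a w ^ 2) / 2) {0..1}"
proof -
  have x0: "0 \<le> x0 a" "x0 a \<le> 1"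
    using a by (simp_all add: x0_def)
  have "((\<lambda>x. x) has_integral 1 ^ 2 / 2 - x0 a ^ 2 / 2) {x0 a..1}"
    using x0 by (intro fundamental_theorem_of_calculus)
      (auto intro!: derivative_eq_intros simp flip: has_real_derivative_iff_has_vector_derivative)
  then have "((\<lambda>x. x) has_integral 1 / 2 - x0 a ^ 2 / 2) {x0 a..1}"
    by simp
  then have "(g a has_integral 1 / 2 - x0 a ^ 2 / 2) {x0 a..1}"
    by (rule has_integral_eq[rotated]) (simp add: g_eq_self[OF a])
  from has_integral_combine[OF x0 has_integral_g_lower[OF a] this]
  show ?thesis
    by (simp add: add.commute)
qed

lemma sums_integral_nonneg:
  fixes f :: "nat \<Rightarrow> 'a::euclidean_space \<Rightarrow> real"
  assumes int: "\<And>k. (f k has_integral I k) S"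
    and nonneg: "\<And>k x. x \<in> S \<Longrightarrow> 0 \<le> f k x"
    and sums: "\<And>x. x \<in> S \<Longrightarrow> (\<lambda>k. f k x) sums F x"
    and F: "F integrable_on S"
  shows "I sums integral S F"
proof -
  define P where "P n x = (\<Sum>k<n. f k x)" for n x
  have P_int: "(P n has_integral (\<Sum>k<n. I k)) S" for n
    unfolding P_def by (intro has_integral_sum int) auto
  have P_le: "P n x \<le> F x" if "x \<in> S" for n x
    using sum_le_suminf[OF sums_summable[OF sums[OF that]], of "{..<n}"] nonneg[OF that]
      sums_unique[OF sums[OF that]] by (simp add: P_def)
  have "(\<lambda>n. integral S (P n)) \<longlonglongrightarrow> integral S F"
  proof (rule monotone_convergence_increasing[THEN conjunct2])
    show "P k integrable_on S" for k
      using P_int by blast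
    show "P k x \<le> P (Suc k) x" if "x \<in> S" for k x
      using nonneg[OF that] by (simp add: P_def)
    show "(\<lambda>k. P k x) \<longlonglongrightarrow> F x" if "x \<in> S" for x
      using sums[OF that] by (simp add: P_def sums_def)
    have "norm (integral S (P k)) \<le> integral S F" for k
    proof -
      have "0 \<le> integral S (P k)"
        using P_int nonneg by (intro integral_nonneg) (auto simp: P_def intro: sum_nonneg)
      moreover have "integral S (P k) \<le> integral S F"
        using P_int F P_le by (intro integral_le) auto
      ultimately show ?thesis
        by simp
    qed
    then show "bounded (range (\<lambda>k. integral S (P k)))"
      by (intro boundedI) auto
  qed
  then show ?thesis
    using integral_unique[OF P_int] by (simp add: sums_def)
qed

lemma Y_square_sums:
  assumes a: "a > 0" and w: "0 \<le> w" "w < 1"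
  shows "(\<lambda>k. real (Suc k) * (w powr (a + 1)) ^ k * (1 - w powr a) ^ 2) sums Y a w ^ 2"
proof -
  have "norm (w powr (a + 1)) < 1"
    using powr_lt_1[OF w, of "a + 1"] a by simp
  then have "(\<lambda>k. real (Suc k) * (w powr (a + 1)) ^ k * (1 - w powr a) ^ 2)
      sums (1 / (1 - w powr (a + 1)) ^ 2 * (1 - w powr a) ^ 2)"
    by (intro sums_mult2 geometric_deriv_sums)
  moreover have "1 / (1 - w powr (a + 1)) ^ 2 * (1 - w powr a) ^ 2 = Y a w ^ 2"
    using w by (simp add: Y_def power_divide)
  ultimately show ?thesis
    by simp
qed

lemma Y_square_term_partial_fractions:
  fixes a c K :: real
  assumes a: "a > 0" and c: "c = a + 1" and K: "K \<ge> 0"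
  shows "(K + 1) * (1 / (c * K + 1) - 2 * (1 / (c * K + a + 1)) + 1 / (c * K + 2 * a + 1))
      = a / c * (1 / (c * K + 1) - 1 / (c * K + c + a))"
proof -
  have "c * K \<ge> 0"
    using a c K by simp
  then have pos: "c > 0" "c * K + 1 > 0" "c * K + a + 1 > 0" "c * K + c + a > 0"
    using a c by linarith+
  have s1: "(K + 1) / (c * K + 1) - a / c / (c * K + 1) = 1 / c"
    using pos by (simp add: divide_simps) (simp add: c algebra_simps)
  have s2: "2 * (K + 1) / (c * K + a + 1) = 2 / c"
    using pos by (simp add: divide_simps) (simp add: c algebra_simps)
  have s3: "(K + 1) / (c * K + c + a) + a / c / (c * K + c + a) = 1 / c"
    using pos by (simp add: divide_simps) (simp add: c algebra_simps)
  have "c * K + 2 * a + 1 = c * K + c + a"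
    using c by simp
  then have "(K + 1) * (1 / (c * K + 1) - 2 * (1 / (c * K + a + 1)) + 1 / (c * K + 2 * a + 1))
      - a / c * (1 / (c * K + 1) - 1 / (c * K + c + a))
    = ((K + 1) / (c * K + 1) - a / c / (c * K + 1)) - 2 * (K + 1) / (c * K + a + 1)
      + ((K + 1) / (c * K + c + a) + a / c / (c * K + c + a))"
    by (simp add: algebra_simps)
  then show ?thesis
    unfolding s1 s2 s3 by simp
qed

lemma has_integral_Y_square_term:
  fixes a :: real
  assumes a: "a > 0"
  shows "((\<lambda>w. real (Suc k) * (w powr (a + 1)) ^ k * (1 - w powr a) ^ 2) has_integral
          a / (a + 1) * (1 / ((a + 1) * real k + 1) - 1 / ((a + 1) * real k + (a + 1) + a))) {0..1}"
proof -
  define c where "c = a + 1"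
  have powr_int: "((\<lambda>w. w powr p) has_integral 1 / (p + 1)) {0..1}" if "p \<ge> 0" for p :: real
    using has_integral_powr_from_0[of p 1] that by simp
  have "c * real k \<ge> 0"
    using a by (simp add: c_def)
  then have expanded: "((\<lambda>w. real (Suc k) * (w powr (c * k) - 2 * w powr (c * k + a) + w powr (c * k + 2 * a)))
      has_integral real (Suc k) * (1 / (c * k + 1) - 2 * (1 / (c * k + a + 1)) + 1 / (c * k + 2 * a + 1))) {0..1}"
    using a by (intro has_integral_mult_right has_integral_add has_integral_diff has_integral_cmul powr_int) auto
  have expand: "real (Suc k) * (w powr c) ^ k * (1 - w powr a) ^ 2
      = real (Suc k) * (w powr (c * k) - 2 * w powr (c * k + a) + w powr (c * k + 2 * a))"
    if "w \<in> {0..1} - {0}" for w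
  proof -
    from that have "w > 0"
      by auto
    then have "(w powr c) ^ k = w powr (c * k)"
      by (simp add: powr_power mult.commute)
    moreover have "w powr (c * k + a) = w powr (c * k) * w powr a"
      and "w powr (c * k + 2 * a) = w powr (c * k) * (w powr a * w powr a)"
      by (simp_all add: powr_add[symmetric])
    ultimately show ?thesis
      by (simp add: power2_eq_square algebra_simps)
  qed
  have "real (Suc k) * (1 / (c * k + 1) - 2 * (1 / (c * k + a + 1)) + 1 / (c * k + 2 * a + 1))
      = a / c * (1 / (c * k + 1) - 1 / (c * k + c + a))"
    using Y_square_term_partial_fractions[OF a c_def, of "real k"] by (simp only: of_nat_Suc add.commute[of 1])
  with has_integral_spike_finite[of "{0}", OF _ expand expanded]
  show ?thesis
    by (simp add: c_def)
qed

lemma integral_Y_square: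
  assumes a: "a > 0"
  shows "integral {0..1} (\<lambda>w. Y a w ^ 2) = a / (a + 1) * (pi * cot (pi / (a + 1)) / (a + 1)) + 1 / (a + 1)"
proof -
  define c where "c = a + 1"
  define F where "F w = (if w = 1 then 0 else Y a w ^ 2)" for w
  have Y_square_int: "(\<lambda>w. Y a w ^ 2) integrable_on {0..1}"
    by (intro integrable_continuous_real continuous_intros continuous_on_Y[OF a])
  have "integral {0..1} F = integral {0..1} (\<lambda>w. Y a w ^ 2)"
    by (rule integral_spike[of "{1}"]) (auto simp: F_def)
  moreover have "(\<lambda>k. a / c * (1 / (c * real k + 1) - 1 / (c * real k + c + a))) sums integral {0..1} F"
  proof (rule sums_integral_nonneg)
    show "(\<lambda>k. real (Suc k) * (w powr (a + 1)) ^ k * (1 - w powr a) ^ 2) sums F w" if "w \<in> {0..1}" for w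
      using that Y_square_sums[OF a, of w] by (cases "w = 1") (auto simp: F_def)
    show "F integrable_on {0..1}"
      by (rule integrable_spike[OF Y_square_int, of "{1}"]) (auto simp: F_def)
  qed (use has_integral_Y_square_term[OF a] in \<open>auto simp: c_def\<close>)
  moreover have "(\<lambda>k. a / c * ((1 / (c * real k + 1) - 1 / (c * real k + c - 1))
      + (1 / (c * real k + a) - 1 / (c * real k + c + a)))) sums (a / c * (pi * cot (pi / c) / c + 1 / a))"
    using a by (intro sums_mult sums_add cot_arith_progression_sums inverse_linear_telescope_sums)
      (auto simp: c_def)
  moreover have "c * real k + c - 1 = c * real k + a" for k
    by (simp add: c_def)
  ultimately have "integral {0..1} (\<lambda>w. Y a w ^ 2) = a / c * (pi * cot (pi / c) / c + 1 / a)"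
    by (simp add: sums_unique2)
  then show ?thesis
    using a by (simp add: c_def distrib_left)
qed

theorem mainTheorem7:
  fixes a :: real
  assumes "a > 0"
  shows "g a integrable_on {0..1} \<and>
    (\<lambda>n. Gamma (a * real (Suc n) + 1) * Gamma (a * real (Suc n) + real (Suc n) - 1)
              / (Gamma (a * real (Suc n) + real (Suc n) + 2) * Gamma (a * real (Suc n))))
           sums (1 - integral {0..1} (g a)) \<and>
    integral {0..1} (g a) =
           1 - a / (2 * (a + 1)) - a * pi / (2 * (a + 1)^2) * cot (a * pi / (a + 1))"
proof -
  define A where "A = pi * cot (pi / (a + 1)) / (a + 1)"
  have integral_g: "integral {0..1} (g a) = 1 / 2 + (a / (a + 1) * A + 1 / (a + 1)) / 2"
    using integral_unique[OF has_integral_g[OF assms]] integral_Y_square[OF assms] by (simp add: A_def)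
  have "a * pi / (a + 1) = pi - pi / (a + 1)"
    using assms by (simp add: field_simps)
  then have "cot (a * pi / (a + 1)) = - cot (pi / (a + 1))"
    by (simp add: cot_def)
  then have cot_term: "a * pi / (2 * (a + 1)^2) * cot (a * pi / (a + 1)) = - (a / (2 * (a + 1)) * A)"
    by (simp add: A_def power2_eq_square mult.assoc distrib_left[symmetric])
  have "a + 1 \<noteq> 0"
    using assms by simp
  then have closed_form:
      "integral {0..1} (g a) = 1 - a / (2 * (a + 1)) - a * pi / (2 * (a + 1)^2) * cot (a * pi / (a + 1))"
    unfolding integral_g cot_term by (simp add: divide_simps) (simp add: algebra_simps)
  have sum_value: "1 - integral {0..1} (g a) = a / (2 * (a + 1)) * (1 - A)"
    unfolding integral_g using assms by (simp add: field_simps)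
  show ?thesis
    unfolding sum_value A_def
    using has_integral_integrable[OF has_integral_g[OF assms]] Gamma_quotient_sums[OF assms] closed_form
    by (intro conjI)
qed

end
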